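(* Consider an instance of the Nash equilibrium complementarity problem (NECP) that satisfies the dominance condition, and the corresponding instance of the tropical Nash equilibrium complementarity problem (TNECP) obtained by the logarithmic image, i.e. $M^-=\log(-M)$ and $q^+=\log q$ (entrywise, with $\log 0=-\infty$). Then the solutions of the two problems have the same supports.
   Context: NECP: given a square real matrix $M$ whose columns are nonpositive with at least one negative entry, and a vector $q$ with positive entries, find $(w,z)$ with $w=Mz+q$, $w^\top z=0$, $z\neq 0$, $w,z\geq 0$. TNECP over the max-plus semifield $\mathbb{T}=\mathbb{R}\cup\{-\infty\}$ ($\oplus=\max$, $\odot=+$): find $(w,z)\in\mathbb{T}^n\times\mathbb{T}^n$ with $w\oplus M^-\odot z=q^+$, $w^\top\odot z=-\infty$, $z\neq-\infty$. The support of a vector is the set of indices of its nonzero entries (classical) or non-$(-\infty)$ entries (tropical). Dominance condition: for a system $Ax=b$, $x\geq 0$ with $A\geq 0$ having a nonzero entry in every column and $b>0$, the normalized matrix is $(\operatorname{diag} b)^{-1}A(\operatorname{diag} u)^{-1}$ where $u_j$ is the largest entry of the $j$th column of $(\operatorname{diag} b)^{-1}A$; it is columnwise normal (entries in $[0,1]$, each column has a $1$-entry). A columnwise normal matrix with $n$ rows satisfies the dominance condition if (a) some $n\times n$ submatrix covers a permutation matrix (i.e. the difference is entrywise nonnegative), and (b) every $n\times n$ submatrix covering a permutation matrix has all row sums less than $2$. The NECP instance satisfies the dominance condition if the normalized matrix of the system $(I\ \ -M)\binom{w}{z}=q$ does. *)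

theory Defs
  imports Complex_Main "HOL-Library.Extended_Real"
begin

definition col_scale :: "('m::finite \<Rightarrow> 'c \<Rightarrow> real) \<Rightarrow> ('m \<Rightarrow> real) \<Rightarrow> 'c \<Rightarrow> real" where
  "col_scale A b j = Max (range (\<lambda>i. A i j / b i))"

text \<open>Normalized matrix (diag b)^-1 A (diag u)^-1 with u_j the largest entry of column j of (diag b)^-1 A.\<close>
definition normalized_matrix :: "('m::finite \<Rightarrow> 'c \<Rightarrow> real) \<Rightarrow> ('m \<Rightarrow> real) \<Rightarrow> 'm \<Rightarrow> 'c \<Rightarrow> real" where
  "normalized_matrix A b i j = A i j / (b i * col_scale A b j)"

definition covers_permutation :: "('m::finite \<Rightarrow> 'c \<Rightarrow> real) \<Rightarrow> 'c set \<Rightarrow> bool" where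
  "covers_permutation N S \<longleftrightarrow> (\<exists>\<sigma>. bij_betw \<sigma> (UNIV :: 'm set) S \<and> (\<forall>i. N i (\<sigma> i) - 1 \<ge> 0))"

definition dominance_condition :: "('m::finite \<Rightarrow> 'c::finite \<Rightarrow> real) \<Rightarrow> bool" where
  "dominance_condition (N :: 'm \<Rightarrow> 'c \<Rightarrow> real) \<longleftrightarrow>
     (\<exists>S. card S = card (UNIV :: 'm set) \<and> covers_permutation N S) \<and>
     (\<forall>S. card S = card (UNIV :: 'm set) \<and> covers_permutation N S \<longrightarrow> (\<forall>i. (\<Sum>j\<in>S. N i j) < 2))"

text \<open>System matrix (I  -M) of the NECP; columns Inl j correspond to w, Inr j to z.\<close>
definition necp_system :: "('n \<Rightarrow> 'n \<Rightarrow> real) \<Rightarrow> 'n \<Rightarrow> 'n + 'n \<Rightarrow> real" where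
  "necp_system M i c = (case c of Inl j \<Rightarrow> (if i = j then 1 else 0) | Inr j \<Rightarrow> - M i j)"

definition necp_dominance :: "('n::finite \<Rightarrow> 'n \<Rightarrow> real) \<Rightarrow> ('n \<Rightarrow> real) \<Rightarrow> bool" where
  "necp_dominance M q \<longleftrightarrow> dominance_condition (normalized_matrix (necp_system M) q)"

definition necp_solution :: "('n::finite \<Rightarrow> 'n \<Rightarrow> real) \<Rightarrow> ('n \<Rightarrow> real) \<Rightarrow> ('n \<Rightarrow> real) \<Rightarrow> ('n \<Rightarrow> real) \<Rightarrow> bool" where
  "necp_solution M q w z \<longleftrightarrow>
     (\<forall>i. w i = (\<Sum>j\<in>UNIV. M i j * z j) + q i) \<and>
     (\<Sum>i\<in>UNIV. w i * z i) = 0 \<and> z \<noteq> (\<lambda>_. 0) \<and> (\<forall>i. w i \<ge> 0 \<and> z i \<ge> 0)"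

text \<open>Tropical (max-plus) semifield R \<union> {-\<infinity>} represented inside ereal (excluding +\<infinity>).\<close>
definition trop_solution :: "('n::finite \<Rightarrow> 'n \<Rightarrow> ereal) \<Rightarrow> ('n \<Rightarrow> ereal) \<Rightarrow> ('n \<Rightarrow> ereal) \<Rightarrow> ('n \<Rightarrow> ereal) \<Rightarrow> bool" where
  "trop_solution Mm qp w z \<longleftrightarrow>
     (\<forall>i. w i \<noteq> \<infinity> \<and> z i \<noteq> \<infinity>) \<and>
     (\<forall>i. max (w i) (Max (range (\<lambda>j. Mm i j + z j))) = qp i) \<and>
     Max (range (\<lambda>i. w i + z i)) = - \<infinity> \<and>
     z \<noteq> (\<lambda>_. - \<infinity>)"

definition trop_log :: "real \<Rightarrow> ereal" where
  "trop_log x = (if x = 0 then - \<infinity> else ereal (ln x))"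

definition supp :: "('n \<Rightarrow> real) \<Rightarrow> 'n set" where
  "supp v = {i. v i \<noteq> 0}"

definition trop_supp :: "('n \<Rightarrow> ereal) \<Rightarrow> 'n set" where
  "trop_supp v = {i. v i \<noteq> - \<infinity>}"

end

theory Submission
  imports Defs "HOL-Analysis.Analysis"
begin

text \<open>Scale the system \<open>(I -M) x = q\<close> of the NECP, \<open>x = (w, z)\<close>, to \<open>N y = 1\<close>, where the
  normalized matrix \<open>N\<close> has column maxima \<open>1\<close>. Both classically and tropically, the supports
  of the solutions \<open>x\<close> are exactly the column sets \<open>J\<close> that contain, in every row, a column
  whose normalized entry in that row is \<open>1\<close>; complementarity and \<open>z \<noteq> 0\<close> only depend on the
  supports of \<open>w\<close> and \<open>z\<close>. Tropically this is immediate from the max-plus equations.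
  Classically, the dominance condition makes the \<open>1\<close> in each column unique. Choosing one \<open>1\<close>
  per row inside \<open>J\<close> then gives a strictly diagonally dominant square subsystem, which keeps
  a positive solution after the right-hand side is lowered to make room for the other columns
  of \<open>J\<close>. Conversely, if a row had no \<open>1\<close> on the support of a solution, that row of \<open>N y\<close>
  would be bounded by the weight of a partial matching of \<open>1\<close>s, which dominance keeps
  below \<open>1\<close>.\<close>

definition mat_vec :: "('m \<Rightarrow> 'c::finite \<Rightarrow> real) \<Rightarrow> ('c \<Rightarrow> real) \<Rightarrow> 'm \<Rightarrow> real" where
  "mat_vec A x i = (\<Sum>c\<in>UNIV. A i c * x c)"

lemma finite_ex_arg_max_on:
  fixes f :: "'a \<Rightarrow> 'b::linorder"
  assumes "finite S" and "S \<noteq> {}"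
  shows "\<exists>x\<in>S. \<forall>y\<in>S. f y \<le> f x"
proof -
  have "Max (f ` S) \<in> f ` S"
    using assms by simp
  then show ?thesis
    using Max_ge[of "f ` S"] assms by fastforce
qed


section \<open>Strictly diagonally dominant systems\<close>

locale diag_dominant =
  fixes P :: "'n::finite \<Rightarrow> 'n \<Rightarrow> real"
  assumes nonneg: "0 \<le> P i m"
    and diag: "P i i = 1"
    and off_diag_sum_lt_1: "(\<Sum>m\<in>UNIV - {i}. P i m) < 1"
begin

abbreviation off_diag_sum :: "'n \<Rightarrow> real" where
  "off_diag_sum i \<equiv> \<Sum>m\<in>UNIV - {i}. P i m"

lemma mat_vec_split_diag: "mat_vec P y i = y i + (\<Sum>m\<in>UNIV - {i}. P i m * y m)"
  by (simp add: mat_vec_def sum.remove[of UNIV i] diag)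

lemma off_diag_sum_nonneg: "0 \<le> off_diag_sum i"
  by (simp add: nonneg sum_nonneg)

lemma kernel_trivial:
  assumes "\<forall>i. mat_vec P d i = 0"
  shows "d = (\<lambda>_. 0)"
proof -
  obtain p where p: "\<And>m. \<bar>d m\<bar> \<le> \<bar>d p\<bar>"
    using finite_ex_arg_max_on[of UNIV "\<lambda>m. \<bar>d m\<bar>"] by auto
  have "\<bar>d p\<bar> = \<bar>\<Sum>m\<in>UNIV - {p}. P p m * d m\<bar>"
    using assms mat_vec_split_diag[of d p] by (simp add: eq_neg_iff_add_eq_0)
  also have "\<dots> \<le> (\<Sum>m\<in>UNIV - {p}. P p m * \<bar>d p\<bar>)"
    by (rule order_trans[OF sum_abs sum_mono]) (simp add: abs_mult nonneg mult_left_mono p)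
  also have "\<dots> = off_diag_sum p * \<bar>d p\<bar>"
    by (simp add: sum_distrib_right)
  finally have "\<bar>d p\<bar> = 0"
    using off_diag_sum_lt_1[of p] by (smt (verit) mult_less_cancel_right2)
  then show ?thesis
    using p by (metis abs_le_zero_iff)
qed

lemma solvable: "\<exists>y. \<forall>i. mat_vec P y i = b i"
proof -
  define f where "f = (\<lambda>v::real^'n. \<chi> i. mat_vec P (($) v) i)"
  have "linear f"
    unfolding f_def mat_vec_def
    by (rule linearI) (simp_all add: vec_eq_iff algebra_simps sum.distrib sum_distrib_left)
  moreover have "inj f"
  proof (rule linear_injective_0[OF \<open>linear f\<close>, THEN iffD2], intro allI impI)
    fix v assume "f v = 0"
    then have "($) v = (\<lambda>_. 0)"
      by (intro kernel_trivial) (simp add: f_def vec_eq_iff)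
    then show "v = 0"
      by (simp add: vec_eq_iff fun_eq_iff)
  qed
  ultimately obtain v where "f v = (\<chi> i. b i)"
    by (metis linear_injective_imp_surjective surjE)
  then show ?thesis
    by (auto simp: f_def vec_eq_iff)
qed

text \<open>If the minimum \<open>y p\<close> were \<open>\<le> 0\<close>, the row of the maximum \<open>y q\<close> gives \<open>y q \<le> 1 - s\<^sub>q y p\<close>,
  and then the row of \<open>p\<close> gives \<open>y p \<ge> b p - s\<^sub>p + s\<^sub>p s\<^sub>q y p \<ge> b p - s\<^sub>p + y p\<close>,
  where \<open>s\<close> denotes the off-diagonal row sums.\<close>
lemma solution_pos:
  assumes b: "\<forall>i. off_diag_sum i < b i \<and> b i \<le> 1"
    and sol: "\<forall>i. mat_vec P y i = b i"
  shows "0 < y m"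
proof -
  obtain p where p: "\<And>m. y p \<le> y m"
    using finite_ex_arg_max_on[of UNIV "\<lambda>m. - y m"] by auto
  obtain q where q: "\<And>m. y m \<le> y q"
    using finite_ex_arg_max_on[of UNIV y] by auto
  have row: "y i = b i - (\<Sum>m\<in>UNIV - {i}. P i m * y m)" for i
    using sol mat_vec_split_diag[of y i] by simp
  have "0 < y p"
  proof (rule ccontr)
    assume "\<not> 0 < y p"
    have "off_diag_sum q * y p \<le> (\<Sum>m\<in>UNIV - {q}. P q m * y m)"
      unfolding sum_distrib_right by (rule sum_mono) (simp add: nonneg mult_left_mono p)
    then have yq: "max (y q) 0 \<le> 1 - off_diag_sum q * y p"
      using row[of q] b \<open>\<not> 0 < y p\<close> off_diag_sum_nonneg[of q]
      by (smt (verit) mult_nonneg_nonpos)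
    have "(\<Sum>m\<in>UNIV - {p}. P p m * y m) \<le> off_diag_sum p * max (y q) 0"
      unfolding sum_distrib_right by (rule sum_mono) (simp add: nonneg mult_left_mono q le_max_iff_disj)
    also have "\<dots> \<le> off_diag_sum p * (1 - off_diag_sum q * y p)"
      using yq off_diag_sum_nonneg by (simp add: mult_left_mono)
    also have "\<dots> = off_diag_sum p - (off_diag_sum p * off_diag_sum q) * y p"
      by (simp add: algebra_simps)
    finally have "y p \<ge> b p - off_diag_sum p + (off_diag_sum p * off_diag_sum q) * y p"
      using row[of p] by linarith
    moreover have "off_diag_sum p * off_diag_sum q \<le> 1"
      using off_diag_sum_lt_1 off_diag_sum_nonneg by (simp add: mult_le_one less_imp_le)
    then have "y p \<le> (off_diag_sum p * off_diag_sum q) * y p"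
      using mult_right_mono_neg[of _ 1 "y p"] \<open>\<not> 0 < y p\<close> by simp
    ultimately show False
      using b[rule_format, of p] by linarith
  qed
  then show ?thesis
    using p by (meson less_le_trans)
qed

lemma ex_pos_solution:
  assumes "\<forall>i. off_diag_sum i < b i \<and> b i \<le> 1"
  shows "\<exists>y. (\<forall>m. 0 < y m) \<and> (\<forall>i. mat_vec P y i = b i)"
  using solvable[of b] solution_pos[OF assms] by blast

end

section \<open>Normal matrices satisfying the dominance condition\<close>

lemma two_le_sum_if_two_terms_ge_1:
  fixes f :: "'a::finite \<Rightarrow> real"
  assumes "\<forall>m. 0 \<le> f m" and "a \<noteq> b" and "1 \<le> f a" and "1 \<le> f b"
  shows "2 \<le> (\<Sum>m\<in>UNIV. f m)"
proof -
  have "(\<Sum>m\<in>{a, b}. f m) \<le> (\<Sum>m\<in>UNIV. f m)"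
    by (rule sum_mono2) (use assms(1) in auto)
  then show ?thesis
    using assms(2-4) by simp
qed

lemma finite_ex_pos_mult_less:
  fixes K \<delta> :: "'a::finite \<Rightarrow> real"
  assumes "\<forall>i. 0 < \<delta> i"
  shows "\<exists>\<epsilon>>0. \<forall>i. \<epsilon> * K i < \<delta> i"
proof -
  have "\<forall>\<^sub>F \<epsilon> in at_right 0. \<epsilon> * K i < \<delta> i" for i
  proof -
    have "((\<lambda>\<epsilon>. \<epsilon> * K i) \<longlongrightarrow> 0 * K i) (at_right 0)"
      by (intro tendsto_intros)
    then show ?thesis
      using assms by (auto dest: order_tendstoD(2))
  qed
  then have "\<forall>\<^sub>F \<epsilon> in at_right 0. 0 < \<epsilon> \<and> (\<forall>i. \<epsilon> * K i < \<delta> i)"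
    by (intro eventually_conj eventually_all_finite) (auto simp: eventually_at_right_less)
  then show ?thesis
    by (auto dest: eventually_happens)
qed

definition covering_sets :: "('m \<Rightarrow> 'c \<Rightarrow> real) \<Rightarrow> 'c set set" where
  "covering_sets N = {J. \<forall>i. \<exists>c\<in>J. N i c = 1}"

locale dominant_normal_matrix =
  fixes N :: "'m::finite \<Rightarrow> 'c::finite \<Rightarrow> real"
  assumes nonneg: "0 \<le> N i c"
    and le_1: "N i c \<le> 1"
    and column_has_1: "\<exists>i. N i c = 1"
    and dominance: "dominance_condition N"
begin

lemma ex_matching:
  obtains \<sigma> where "inj \<sigma>" and "\<And>k. N k (\<sigma> k) = 1"
proof -
  obtain S \<sigma> where "bij_betw \<sigma> (UNIV :: 'm set) S" "\<forall>k. N k (\<sigma> k) - 1 \<ge> 0"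
    using dominance unfolding dominance_condition_def covers_permutation_def by blast
  then show thesis
    using that le_1 by (metis bij_betw_imp_inj_on diff_ge_0_iff_ge order_antisym)
qed

lemma matching_row_sum_lt_2:
  assumes "inj \<sigma>" and "\<And>k. N k (\<sigma> k) = 1"
  shows "(\<Sum>m\<in>UNIV. N i (\<sigma> m)) < 2"
proof -
  have "card (range \<sigma>) = card (UNIV :: 'm set)"
    using assms(1) by (simp add: card_image)
  moreover have "covers_permutation N (range \<sigma>)"
    unfolding covers_permutation_def
    using assms by (auto intro!: exI[of _ \<sigma>] inj_on_imp_bij_betw)
  ultimately have "(\<Sum>c\<in>range \<sigma>. N i c) < 2"
    using dominance unfolding dominance_condition_def by blast
  then show ?thesis
    by (simp add: sum.reindex[OF assms(1)])
qed

text \<open>If rows \<open>i \<noteq> k\<close> both had a \<open>1\<close> in column \<open>c\<close>, some row would contain two \<open>1\<close>s of a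
  matching (of a given one if \<open>c\<close> is matched, else of the one redirected through \<open>c\<close>), so its
  row sum over the matching would reach \<open>2\<close>.\<close>
lemma column_1_unique:
  assumes "N i c = 1" and "N k c = 1"
  shows "i = k"
proof (rule ccontr)
  assume "i \<noteq> k"
  obtain \<sigma> where \<sigma>: "inj \<sigma>" "\<And>k. N k (\<sigma> k) = 1"
    using ex_matching by metis
  show False
  proof (cases "c \<in> range \<sigma>")
    case True
    then obtain m where "c = \<sigma> m"
      by blast
    obtain r where "r \<in> {i, k}" and "r \<noteq> m"
      using \<open>i \<noteq> k\<close> by blast
    then have "2 \<le> (\<Sum>m'\<in>UNIV. N r (\<sigma> m'))"
      using assms \<sigma>(2) \<open>c = \<sigma> m\<close>
      by (intro two_le_sum_if_two_terms_ge_1[of _ m r]) (auto simp: nonneg)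
    then show False
      using matching_row_sum_lt_2[OF \<sigma>] by (simp add: not_le[symmetric])
  next
    case False
    define \<tau> where "\<tau> = \<sigma>(i := c)"
    have "inj \<tau>"
      unfolding \<tau>_def using \<sigma>(1) False by (simp add: inj_on_fun_updI)
    moreover have "N j (\<tau> j) = 1" for j
      using assms \<sigma>(2) by (simp add: \<tau>_def)
    moreover have "2 \<le> (\<Sum>m\<in>UNIV. N k (\<tau> m))"
      using assms \<sigma>(2) \<open>i \<noteq> k\<close>
      by (intro two_le_sum_if_two_terms_ge_1[of _ i k]) (auto simp: nonneg \<tau>_def)
    ultimately show False
      using matching_row_sum_lt_2 by (simp add: not_le[symmetric])
  qed
qed

lemma matching_inj:
  assumes "\<And>k. N k (\<sigma> k) = 1"
  shows "inj \<sigma>"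
  by (rule injI) (metis assms column_1_unique)

lemma partial_matching_weight_lt_1:
  assumes "i0 \<notin> R" and "\<And>k. k \<in> R \<Longrightarrow> N k (\<tau> k) = 1"
  shows "(\<Sum>k\<in>R. N i0 (\<tau> k)) < 1"
proof -
  obtain \<sigma> where \<sigma>: "\<And>k. N k (\<sigma> k) = 1"
    using ex_matching by blast
  define \<sigma>' where "\<sigma>' k = (if k \<in> R then \<tau> k else \<sigma> k)" for k
  have \<sigma>': "N k (\<sigma>' k) = 1" for k
    using assms(2) \<sigma> by (simp add: \<sigma>'_def)
  have "(\<Sum>k\<in>R. N i0 (\<tau> k)) = (\<Sum>k\<in>R. N i0 (\<sigma>' k))"
    by (simp add: \<sigma>'_def)
  also have "\<dots> \<le> (\<Sum>m\<in>UNIV - {i0}. N i0 (\<sigma>' m))"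
    by (rule sum_mono2) (use assms(1) nonneg in auto)
  also have "\<dots> = (\<Sum>m\<in>UNIV. N i0 (\<sigma>' m)) - 1"
    using \<sigma>'[of i0] by (simp add: sum.remove[of UNIV i0])
  also have "\<dots> < 1"
    using matching_row_sum_lt_2[OF matching_inj] \<sigma>' by fastforce
  finally show ?thesis .
qed

text \<open>Group the support of \<open>x\<close> by the row \<open>r c\<close> of the \<open>1\<close> in each column. Each group carries
  \<open>x\<close>-mass at most \<open>1\<close>, so if row \<open>i0\<close> met no \<open>1\<close> on the support, row \<open>i0\<close> of \<open>N x\<close> would be
  bounded by the weight of a partial matching avoiding \<open>i0\<close>, which is \<open>< 1\<close>.\<close>
lemma solution_support_covers:
  assumes x_nonneg: "\<forall>c. 0 \<le> x c" and sol: "\<forall>i. mat_vec N x i = 1"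
  shows "\<exists>c\<in>supp x. N i0 c = 1"
proof (rule ccontr)
  assume uncovered: "\<not> (\<exists>c\<in>supp x. N i0 c = 1)"
  obtain r where r: "\<And>c. N (r c) c = 1"
    using column_has_1 by metis
  define R where "R = r ` supp x"
  let ?block = "\<lambda>k. {c \<in> supp x. r c = k}"
  have "i0 \<notin> R"
    using uncovered r by (auto simp: R_def)
  have block_mass: "(\<Sum>c\<in>?block k. x c) \<le> 1" for k
  proof -
    have "(\<Sum>c\<in>?block k. x c) = (\<Sum>c\<in>?block k. N k c * x c)"
      using r by (auto intro: sum.cong)
    also have "\<dots> \<le> mat_vec N x k"
      unfolding mat_vec_def by (rule sum_mono2) (use nonneg x_nonneg in auto)
    finally show ?thesis
      using sol by simp
  qed
  have "\<exists>c\<in>?block k. \<forall>c'\<in>?block k. N i0 c' \<le> N i0 c" if "k \<in> R" for k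
    using finite_ex_arg_max_on[of "?block k" "N i0"] that by (auto simp: R_def)
  then obtain \<tau> where \<tau>: "\<And>k. k \<in> R \<Longrightarrow> \<tau> k \<in> ?block k"
    and \<tau>_max: "\<And>k c. k \<in> R \<Longrightarrow> c \<in> ?block k \<Longrightarrow> N i0 c \<le> N i0 (\<tau> k)"
    by metis
  have "1 = mat_vec N x i0"
    using sol by simp
  also have "\<dots> = (\<Sum>c\<in>supp x. N i0 c * x c)"
    unfolding mat_vec_def by (rule sum.mono_neutral_right) (auto simp: supp_def)
  also have "\<dots> = (\<Sum>k\<in>R. \<Sum>c\<in>?block k. N i0 c * x c)"
    by (rule sum.group[symmetric]) (auto simp: R_def)
  also have "\<dots> \<le> (\<Sum>k\<in>R. N i0 (\<tau> k) * (\<Sum>c\<in>?block k. x c))"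
    unfolding sum_distrib_left
    by (intro sum_mono) (use \<tau>_max x_nonneg in \<open>auto intro: mult_right_mono\<close>)
  also have "\<dots> \<le> (\<Sum>k\<in>R. N i0 (\<tau> k))"
    by (intro sum_mono) (use block_mass nonneg in \<open>auto intro: mult_left_le\<close>)
  also have "\<dots> < 1"
  proof (rule partial_matching_weight_lt_1[OF \<open>i0 \<notin> R\<close>])
    fix k
    assume "k \<in> R"
    then have "r (\<tau> k) = k"
      using \<tau> by blast
    then show "N k (\<tau> k) = 1"
      using r[of "\<tau> k"] by simp
  qed
  finally show False
    by simp
qed

text \<open>A \<open>1\<close>-matching inside \<open>J\<close> gives a strictly diagonally dominant square subsystem;
  solving it with the right-hand side lowered slightly makes room for a small positive
  weight \<open>\<epsilon>\<close> on the remaining columns of \<open>J\<close>.\<close>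
lemma covering_set_is_solution_support:
  assumes cover: "\<forall>i. \<exists>c\<in>J. N i c = 1"
  shows "\<exists>x. (\<forall>c. 0 \<le> x c) \<and> supp x = J \<and> (\<forall>i. mat_vec N x i = 1)"
proof -
  obtain \<sigma> where \<sigma>_J: "\<And>i. \<sigma> i \<in> J" and \<sigma>: "\<And>i. N i (\<sigma> i) = 1"
    using cover by metis
  have "inj \<sigma>"
    using \<sigma> by (rule matching_inj)
  define P where "P i m = N i (\<sigma> m)" for i m
  interpret P: diag_dominant P
  proof
    show "0 \<le> P i m" "P i i = 1" for i m
      by (simp_all add: P_def nonneg \<sigma>)
    show "(\<Sum>m\<in>UNIV - {i}. P i m) < 1" for i
      using matching_row_sum_lt_2[OF \<open>inj \<sigma>\<close> \<sigma>, of i] \<sigma>[of i]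
      by (simp add: P_def sum.remove[of UNIV i])
  qed
  define K where "K i = (\<Sum>c\<in>J - range \<sigma>. N i c)" for i
  have "K i \<ge> 0" for i
    by (simp add: K_def nonneg sum_nonneg)
  obtain \<epsilon> where "\<epsilon> > 0" and \<epsilon>: "\<forall>i. \<epsilon> * K i < 1 - P.off_diag_sum i"
    using finite_ex_pos_mult_less[of "\<lambda>i. 1 - P.off_diag_sum i" K] P.off_diag_sum_lt_1 by auto
  have "P.off_diag_sum i < 1 - \<epsilon> * K i \<and> 1 - \<epsilon> * K i \<le> 1" for i
    using \<epsilon>[rule_format, of i] \<open>\<epsilon> > 0\<close> mult_nonneg_nonneg[of \<epsilon> "K i"] \<open>K i \<ge> 0\<close> by linarith
  then obtain y where y_pos: "\<forall>m. 0 < y m" and y: "\<forall>i. mat_vec P y i = 1 - \<epsilon> * K i"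
    using P.ex_pos_solution[of "\<lambda>i. 1 - \<epsilon> * K i"] by auto
  define x where "x c = (if c \<in> range \<sigma> then y (inv \<sigma> c) else if c \<in> J then \<epsilon> else 0)" for c
  have "\<forall>c. 0 \<le> x c"
    using y_pos \<open>\<epsilon> > 0\<close> by (simp add: x_def less_imp_le)
  moreover have "supp x = J"
  proof -
    have "x c \<noteq> 0 \<longleftrightarrow> c \<in> J" for c
      using y_pos[rule_format, of "inv \<sigma> c"] \<open>\<epsilon> > 0\<close> \<sigma>_J
      by (cases "c \<in> range \<sigma>") (auto simp: x_def)
    then show ?thesis
      by (auto simp: supp_def)
  qed
  moreover have "mat_vec N x i = 1" for i
  proof -
    have "mat_vec N x i = (\<Sum>c\<in>UNIV - range \<sigma>. N i c * x c) + (\<Sum>c\<in>range \<sigma>. N i c * x c)"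
      unfolding mat_vec_def by (rule sum.subset_diff) simp_all
    also have "(\<Sum>c\<in>UNIV - range \<sigma>. N i c * x c) = \<epsilon> * K i"
      unfolding K_def sum_distrib_left
      by (rule sum.mono_neutral_cong_right) (auto simp: x_def)
    also have "(\<Sum>c\<in>range \<sigma>. N i c * x c) = mat_vec P y i"
      by (simp add: sum.reindex[OF \<open>inj \<sigma>\<close>] x_def P_def mat_vec_def inv_f_f[OF \<open>inj \<sigma>\<close>])
    finally show ?thesis
      using y by simp
  qed
  ultimately show ?thesis
    by blast
qed

theorem normalized_solution_supports:
  "{supp x | x. (\<forall>c. 0 \<le> x c) \<and> (\<forall>i. mat_vec N x i = 1)} = covering_sets N"
proof (intro equalityI subsetI)
  fix J
  assume "J \<in> covering_sets N"
  then obtain x where "(\<forall>c. 0 \<le> x c) \<and> supp x = J \<and> (\<forall>i. mat_vec N x i = 1)"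
    using covering_set_is_solution_support by (auto simp: covering_sets_def)
  then show "J \<in> {supp x | x. (\<forall>c. 0 \<le> x c) \<and> (\<forall>i. mat_vec N x i = 1)}"
    by blast
qed (use solution_support_covers in \<open>auto simp: covering_sets_def\<close>)

end

section \<open>Normalization and tropicalization of a nonnegative system\<close>

definition trop_mat_vec :: "('m \<Rightarrow> 'c::finite \<Rightarrow> ereal) \<Rightarrow> ('c \<Rightarrow> ereal) \<Rightarrow> 'm \<Rightarrow> ereal" where
  "trop_mat_vec A x i = Max (range (\<lambda>c. A i c + x c))"

lemma trop_mat_vec_eq_iff:
  "trop_mat_vec A x i = y \<longleftrightarrow> (\<forall>c. A i c + x c \<le> y) \<and> (\<exists>c. A i c + x c = y)"
  unfolding trop_mat_vec_def by (auto simp: Max_eq_iff)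

lemma trop_log_plus_le_iff:
  assumes "0 \<le> a" and "0 < b"
  shows "trop_log a + ereal t \<le> trop_log b \<longleftrightarrow> a * exp t \<le> b"
proof (cases "a = 0")
  case False
  then have "trop_log a + ereal t \<le> trop_log b \<longleftrightarrow> exp (ln a + t) \<le> b"
    using assms by (simp add: trop_log_def ln_ge_iff)
  then show ?thesis
    using assms False by (simp add: exp_add)
qed (use assms in \<open>simp add: trop_log_def\<close>)

lemma trop_log_plus_eq_iff:
  assumes "0 \<le> a" and "0 < b"
  shows "trop_log a + ereal t = trop_log b \<longleftrightarrow> a * exp t = b"
proof (cases "a = 0")
  case False
  then have "trop_log a + ereal t = trop_log b \<longleftrightarrow> exp (ln a + t) = b"
    using assms by (auto simp: trop_log_def)
  then show ?thesis
    using assms False by (simp add: exp_add)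
qed (use assms in \<open>simp add: trop_log_def\<close>)

locale nonneg_system =
  fixes A :: "'m::finite \<Rightarrow> 'c::finite \<Rightarrow> real" and b :: "'m \<Rightarrow> real"
  assumes A_nonneg: "0 \<le> A i c"
    and column_nonzero: "\<exists>i. A i c \<noteq> 0"
    and b_pos: "0 < b i"
begin

abbreviation u :: "'c \<Rightarrow> real" where
  "u \<equiv> col_scale A b"

abbreviation N :: "'m \<Rightarrow> 'c \<Rightarrow> real" where
  "N \<equiv> normalized_matrix A b"

lemma col_scale_ge: "A i c / b i \<le> u c"
  unfolding col_scale_def by (rule Max_ge) auto

lemma col_scale_attained: "\<exists>i. u c = A i c / b i"
proof -
  have "u c \<in> range (\<lambda>i. A i c / b i)"
    unfolding col_scale_def by (rule Max_in) auto
  then show ?thesis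
    by auto
qed

lemma col_scale_pos: "0 < u c"
proof -
  obtain i where "A i c \<noteq> 0"
    using column_nonzero by blast
  then have "0 < A i c / b i"
    using A_nonneg[of i c] b_pos[of i] by simp
  then show ?thesis
    using col_scale_ge[of i c] by linarith
qed

lemma col_scale_le_iff: "u c \<le> s \<longleftrightarrow> (\<forall>i. A i c \<le> b i * s)"
proof -
  have "u c \<le> s \<longleftrightarrow> (\<forall>i. A i c / b i \<le> s)"
    unfolding col_scale_def by (auto intro: Max.boundedI)
  then show ?thesis
    using b_pos by (simp add: pos_divide_le_eq mult.commute)
qed

lemma normalized_eq: "N i c = A i c / (b i * u c)"
  by (simp add: normalized_matrix_def)

lemma normalized_eq_1_iff: "N i c = 1 \<longleftrightarrow> A i c = b i * u c"
  using b_pos[of i] col_scale_pos[of c] by (auto simp: normalized_eq)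

lemma dominant_normal_matrix_normalized:
  assumes "dominance_condition N"
  shows "dominant_normal_matrix N"
proof
  show "0 \<le> N i c" for i c
    using A_nonneg[of i c] b_pos[of i] col_scale_pos[of c] by (simp add: normalized_eq)
  show "N i c \<le> 1" for i c
    using col_scale_ge[of i c] b_pos[of i] col_scale_pos[of c]
    by (simp add: normalized_eq divide_le_eq_1 mult.commute pos_divide_le_eq)
  show "\<exists>i. N i c = 1" for c
  proof -
    obtain i where "u c = A i c / b i"
      using col_scale_attained by blast
    then have "N i c = 1"
      using b_pos[of i] by (simp add: normalized_eq_1_iff)
    then show ?thesis ..
  qed
qed (fact assms)

lemma mat_vec_normalized_eq_1_iff:
  "mat_vec N (\<lambda>c. u c * x c) i = 1 \<longleftrightarrow> mat_vec A x i = b i"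
proof -
  have "mat_vec N (\<lambda>c. u c * x c) i = mat_vec A x i / b i"
    using col_scale_pos
    by (simp add: mat_vec_def normalized_eq sum_divide_distrib field_simps less_imp_neq[symmetric])
  then show ?thesis
    using b_pos[of i] by auto
qed

theorem nonneg_solution_supports_eq_covering_sets:
  assumes "dominance_condition N"
  shows "{supp x | x. (\<forall>c. 0 \<le> x c) \<and> (\<forall>i. mat_vec A x i = b i)} = covering_sets N"
    (is "?supports = _")
proof -
  interpret N: dominant_normal_matrix N
    using assms by (rule dominant_normal_matrix_normalized)
  have nonneg_iff: "0 \<le> u c * x c \<longleftrightarrow> 0 \<le> x c" for x c
    using col_scale_pos[of c] by (simp add: zero_le_mult_iff)
  have supp_eq: "supp (\<lambda>c. u c * x c) = supp x" for x
    using col_scale_pos by (simp add: supp_def less_imp_neq[symmetric])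
  have "?supports = {supp y | y. (\<forall>c. 0 \<le> y c) \<and> (\<forall>i. mat_vec N y i = 1)}"
  proof (intro equalityI subsetI)
    fix J
    assume "J \<in> ?supports"
    then obtain x where "J = supp x" "\<forall>c. 0 \<le> x c" "\<forall>i. mat_vec A x i = b i"
      by blast
    then show "J \<in> {supp y | y. (\<forall>c. 0 \<le> y c) \<and> (\<forall>i. mat_vec N y i = 1)}"
      by (intro CollectI exI[of _ "\<lambda>c. u c * x c"])
        (simp add: supp_eq nonneg_iff mat_vec_normalized_eq_1_iff)
  next
    fix J
    assume "J \<in> {supp y | y. (\<forall>c. 0 \<le> y c) \<and> (\<forall>i. mat_vec N y i = 1)}"
    then obtain y where "J = supp y" "\<forall>c. 0 \<le> y c" "\<forall>i. mat_vec N y i = 1"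
      by blast
    moreover have "y = (\<lambda>c. u c * (y c / u c))"
      using col_scale_pos by (simp add: less_imp_neq[symmetric])
    ultimately show "J \<in> ?supports"
      by (intro CollectI exI[of _ "\<lambda>c. y c / u c"])
        (metis supp_eq nonneg_iff mat_vec_normalized_eq_1_iff)
  qed
  also have "\<dots> = covering_sets N"
    by (rule N.normalized_solution_supports)
  finally show ?thesis .
qed

lemma trop_column_bound_iff:
  "(\<forall>i. trop_log (A i c) + ereal t \<le> trop_log (b i)) \<longleftrightarrow> u c * exp t \<le> 1"
proof -
  have "trop_log (A i c) + ereal t \<le> trop_log (b i) \<longleftrightarrow> A i c \<le> b i * exp (- t)" for i
    unfolding trop_log_plus_le_iff[OF A_nonneg b_pos] by (simp add: exp_minus field_simps)
  then have "(\<forall>i. trop_log (A i c) + ereal t \<le> trop_log (b i)) \<longleftrightarrow> (\<forall>i. A i c \<le> b i * exp (- t))"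
    by simp
  also have "\<dots> \<longleftrightarrow> u c \<le> exp (- t)"
    by (rule col_scale_le_iff[symmetric])
  also have "\<dots> \<longleftrightarrow> u c * exp t \<le> 1"
    by (simp add: exp_minus field_simps)
  finally show ?thesis .
qed

lemma exp_neg_ln_col_scale: "exp (- ln (u c)) = inverse (u c)"
  using col_scale_pos[of c] by (simp add: exp_minus)

text \<open>In a column \<open>c\<close> attaining the maximum of row \<open>i\<close>, \<open>x c = - ln (A i c / b i)\<close>, while the
  other rows force \<open>x c \<le> - ln (u c)\<close>; hence \<open>A i c / b i = u c\<close>. Conversely, \<open>x c = - ln (u c)\<close>
  on \<open>J\<close> solves the system.\<close>
theorem trop_solution_supports_eq_covering_sets:
  "{trop_supp x | x. (\<forall>c. x c \<noteq> \<infinity>) \<and>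
      (\<forall>i. trop_mat_vec (\<lambda>i c. trop_log (A i c)) x i = trop_log (b i))} = covering_sets N"
    (is "?supports = _")
proof (intro equalityI subsetI)
  fix J
  assume "J \<in> ?supports"
  then obtain x where J: "J = trop_supp x" and fin: "\<forall>c. x c \<noteq> \<infinity>"
    and sol: "\<forall>i. trop_mat_vec (\<lambda>i c. trop_log (A i c)) x i = trop_log (b i)"
    by blast
  have "\<exists>c\<in>J. N i c = 1" for i
  proof -
    obtain c where eq: "trop_log (A i c) + x c = trop_log (b i)"
      using sol by (auto simp: trop_mat_vec_eq_iff)
    have "x c \<noteq> - \<infinity>"
      using eq b_pos[of i] by (auto simp: trop_log_def split: if_splits)
    then obtain t where t: "x c = ereal t"
      using fin by (cases "x c") auto
    have "A i c * exp t = b i"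
      using eq A_nonneg b_pos by (simp add: t trop_log_plus_eq_iff)
    moreover have "\<forall>k. trop_log (A k c) + ereal t \<le> trop_log (b k)"
      using sol unfolding trop_mat_vec_eq_iff t[symmetric] by blast
    then have "u c * exp t \<le> 1"
      by (simp add: trop_column_bound_iff)
    moreover have "A i c \<le> b i * u c"
      using col_scale_ge[of i c] b_pos[of i] by (simp add: pos_divide_le_eq mult.commute)
    ultimately have "(b i * u c) * exp t \<le> A i c * exp t"
      using b_pos[of i] mult_left_le[of "u c * exp t" "b i"] by (simp add: mult.assoc)
    then have "N i c = 1"
      using \<open>A i c \<le> b i * u c\<close> by (simp add: normalized_eq_1_iff)
    then show ?thesis
      using \<open>x c \<noteq> - \<infinity>\<close> by (auto simp: J trop_supp_def)
  qed
  then show "J \<in> covering_sets N"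
    by (simp add: covering_sets_def)
next
  fix J
  assume "J \<in> covering_sets N"
  define x where "x c = (if c \<in> J then ereal (- ln (u c)) else - \<infinity>)" for c
  have "trop_mat_vec (\<lambda>i c. trop_log (A i c)) x i = trop_log (b i)" for i
    unfolding trop_mat_vec_eq_iff
  proof
    show "\<forall>c. trop_log (A i c) + x c \<le> trop_log (b i)"
    proof
      fix c
      show "trop_log (A i c) + x c \<le> trop_log (b i)"
      proof (cases "c \<in> J")
        case True
        have "u c * exp (- ln (u c)) \<le> 1"
          using col_scale_pos[of c] by (simp add: exp_neg_ln_col_scale)
        then show ?thesis
          using True trop_column_bound_iff[of c "- ln (u c)"] by (simp add: x_def)
      qed (simp add: x_def trop_log_def)
    qed
    obtain c where "c \<in> J" and "A i c = b i * u c"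
      using \<open>J \<in> covering_sets N\<close> by (auto simp: covering_sets_def normalized_eq_1_iff)
    then have "A i c * exp (- ln (u c)) = b i"
      using col_scale_pos[of c] by (simp add: exp_neg_ln_col_scale)
    then have "trop_log (A i c) + ereal (- ln (u c)) = trop_log (b i)"
      by (simp only: trop_log_plus_eq_iff[OF A_nonneg b_pos])
    then have "trop_log (A i c) + x c = trop_log (b i)"
      using \<open>c \<in> J\<close> by (simp add: x_def)
    then show "\<exists>c. trop_log (A i c) + x c = trop_log (b i)" ..
  qed
  moreover have "\<forall>c. x c \<noteq> \<infinity>" and "trop_supp x = J"
    by (auto simp: x_def trop_supp_def)
  ultimately show "J \<in> ?supports"
    by blast
qed

end

section \<open>The complementarity problems\<close>

lemma Max_range_sum_type:
  fixes f :: "'a::finite + 'b::finite \<Rightarrow> 'c::linorder"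
  shows "Max (range f) = max (Max (range (\<lambda>a. f (Inl a)))) (Max (range (\<lambda>b. f (Inr b))))"
proof -
  have "range f = range (\<lambda>a. f (Inl a)) \<union> range (\<lambda>b. f (Inr b))"
    by (subst UNIV_sum) (simp add: image_Un image_image)
  then show ?thesis
    by (simp add: Max_Un)
qed

lemma support_case_sum:
  "{c. case_sum w z c \<noteq> null} = Inl ` {a. w a \<noteq> null} \<union> Inr ` {b. z b \<noteq> null}"
proof (rule set_eqI)
  fix c :: "'a + 'b"
  show "c \<in> {c. case_sum w z c \<noteq> null} \<longleftrightarrow> c \<in> Inl ` {a. w a \<noteq> null} \<union> Inr ` {b. z b \<noteq> null}"
    by (cases c) auto
qed

text \<open>With \<open>null\<close> being \<open>0\<close> resp. \<open>-\<infinity>\<close>, the sets \<open>{a. w a \<noteq> null}\<close> are \<^const>\<open>supp\<close> resp. \<^const>\<open>trop_supp\<close>.\<close>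
lemma case_sum_support_pairs:
  fixes null :: 'v and P :: "('a + 'b \<Rightarrow> 'v) \<Rightarrow> bool"
  shows "{({a. w a \<noteq> null}, {b. z b \<noteq> null}) | w z. P (case_sum w z) \<and> Q {a. w a \<noteq> null} {b. z b \<noteq> null}}
    = {(W, Z). Q W Z \<and> Inl ` W \<union> Inr ` Z \<in> {{c. x c \<noteq> null} | x. P x}}"
    (is "?pairs = ?split")
proof (intro equalityI subsetI)
  fix p
  assume "p \<in> ?pairs"
  then show "p \<in> ?split"
    by (auto simp flip: support_case_sum)
next
  fix p
  assume "p \<in> ?split"
  then obtain W Z x where p: "p = (W, Z)" and "Q W Z" and "P x"
    and supp_x: "{c. x c \<noteq> null} = Inl ` W \<union> Inr ` Z"
    by blast
  have "case_sum (\<lambda>a. x (Inl a)) (\<lambda>b. x (Inr b)) = x"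
    by (simp add: fun_eq_iff split: sum.split)
  moreover have "{a. x (Inl a) \<noteq> null} = W" and "{b. x (Inr b) \<noteq> null} = Z"
    using supp_x by (auto simp: set_eq_iff image_iff)
  ultimately show "p \<in> ?pairs"
    using p \<open>Q W Z\<close> \<open>P x\<close>
    by (intro CollectI exI[of _ "\<lambda>a. x (Inl a)"] exI[of _ "\<lambda>b. x (Inr b)"]) simp
qed

lemma necp_system_nonneg_system:
  assumes "\<forall>i j. M i j \<le> 0" and "\<forall>j. \<exists>i. M i j < 0" and "\<forall>i. q i > 0"
  shows "nonneg_system (necp_system M) q"
proof
  show "0 \<le> necp_system M i c" for i c
    using assms(1) by (simp add: necp_system_def split: sum.split)
  have "\<exists>i. M i j \<noteq> 0" for j
    using assms(2) by (metis less_irrefl)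
  then show "\<exists>i. necp_system M i c \<noteq> 0" for c
    by (cases c) (auto simp: necp_system_def)
qed (use assms(3) in simp)

lemma mat_vec_necp_system:
  "mat_vec (necp_system M) (case_sum w z) i = w i - (\<Sum>j\<in>UNIV. M i j * z j)"
proof -
  have "mat_vec (necp_system M) (case_sum w z) i
      = (\<Sum>j\<in>UNIV. (if i = j then 1 else 0) * w j) + (\<Sum>j\<in>UNIV. - M i j * z j)"
    using sum.Plus[of UNIV UNIV "\<lambda>c. necp_system M i c * case_sum w z c"]
    by (simp add: mat_vec_def necp_system_def comp_def)
  then show ?thesis
    by (simp add: sum_negf mult_delta_left)
qed

lemma trop_mat_vec_necp_system:
  assumes "\<forall>j. w j \<noteq> \<infinity>"
  shows "trop_mat_vec (\<lambda>i c. trop_log (necp_system M i c)) (case_sum w z) i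
    = max (w i) (trop_mat_vec (\<lambda>i j. trop_log (- M i j)) z i)"
proof -
  have minf: "- \<infinity> + w j = - \<infinity>" for j
    using assms by (cases "w j") auto
  have "Max (range (\<lambda>j. trop_log (if i = j then 1 else 0) + w j)) = w i"
    by (auto simp: Max_eq_iff trop_log_def image_iff minf)
  then show ?thesis
    by (simp add: trop_mat_vec_def Max_range_sum_type necp_system_def)
qed

lemma complementarity_iff_disjoint_supp:
  fixes w z :: "'n::finite \<Rightarrow> real"
  assumes "\<forall>i. 0 \<le> w i \<and> 0 \<le> z i"
  shows "(\<Sum>i\<in>UNIV. w i * z i) = 0 \<longleftrightarrow> supp w \<inter> supp z = {}"
  using assms by (simp add: sum_nonneg_eq_0_iff supp_def set_eq_iff)

lemma trop_complementarity_iff_disjoint_trop_supp: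
  fixes w z :: "'n::finite \<Rightarrow> ereal"
  assumes "\<forall>i. w i \<noteq> \<infinity> \<and> z i \<noteq> \<infinity>"
  shows "Max (range (\<lambda>i. w i + z i)) = - \<infinity> \<longleftrightarrow> trop_supp w \<inter> trop_supp z = {}"
  using assms by (auto simp: Max_eq_iff trop_supp_def image_iff)

lemma necp_solution_iff:
  "necp_solution M q w z \<longleftrightarrow>
     (\<forall>c. 0 \<le> case_sum w z c) \<and> (\<forall>i. mat_vec (necp_system M) (case_sum w z) i = q i) \<and>
     supp w \<inter> supp z = {} \<and> supp z \<noteq> {}"
proof -
  have "mat_vec (necp_system M) (case_sum w z) i = q i \<longleftrightarrow> w i = (\<Sum>j\<in>UNIV. M i j * z j) + q i" for i
    by (auto simp: mat_vec_necp_system)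
  then show ?thesis
    by (auto simp: necp_solution_def complementarity_iff_disjoint_supp split_sum_all supp_def fun_eq_iff)
qed

lemma trop_solution_iff:
  "trop_solution (\<lambda>i j. trop_log (- M i j)) (\<lambda>i. trop_log (q i)) w z \<longleftrightarrow>
     (\<forall>c. case_sum w z c \<noteq> \<infinity>) \<and>
     (\<forall>i. trop_mat_vec (\<lambda>i c. trop_log (necp_system M i c)) (case_sum w z) i = trop_log (q i)) \<and>
     trop_supp w \<inter> trop_supp z = {} \<and> trop_supp z \<noteq> {}"
proof (cases "\<forall>i. w i \<noteq> \<infinity> \<and> z i \<noteq> \<infinity>")
  case True
  then have "trop_mat_vec (\<lambda>i c. trop_log (necp_system M i c)) (case_sum w z) i
      = max (w i) (Max (range (\<lambda>j. trop_log (- M i j) + z j)))" for i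
    using trop_mat_vec_necp_system[of w M z i] by (simp add: trop_mat_vec_def)
  then show ?thesis
    using True by (simp add: trop_solution_def split_sum_all
        trop_complementarity_iff_disjoint_trop_supp trop_supp_def fun_eq_iff)
next
  case False
  then show ?thesis
    by (auto simp: trop_solution_def split_sum_all)
qed

lemma necp_support_pairs:
  "{(supp w, supp z) | w z. necp_solution M q w z} =
   {(W, Z). W \<inter> Z = {} \<and> Z \<noteq> {} \<and>
      Inl ` W \<union> Inr ` Z \<in> {supp x | x. (\<forall>c. 0 \<le> x c) \<and> (\<forall>i. mat_vec (necp_system M) x i = q i)}}"
  using case_sum_support_pairs[where null = 0 and Q = "\<lambda>W Z. W \<inter> Z = {} \<and> Z \<noteq> {}"
      and P = "\<lambda>x. (\<forall>c. 0 \<le> x c) \<and> (\<forall>i. mat_vec (necp_system M) x i = q i)"]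
  unfolding necp_solution_iff supp_def by (simp only: conj_assoc)

lemma tnecp_support_pairs:
  "{(trop_supp w, trop_supp z) | w z. trop_solution (\<lambda>i j. trop_log (- M i j)) (\<lambda>i. trop_log (q i)) w z} =
   {(W, Z). W \<inter> Z = {} \<and> Z \<noteq> {} \<and>
      Inl ` W \<union> Inr ` Z \<in> {trop_supp x | x. (\<forall>c. x c \<noteq> \<infinity>) \<and>
        (\<forall>i. trop_mat_vec (\<lambda>i c. trop_log (necp_system M i c)) x i = trop_log (q i))}}"
  using case_sum_support_pairs[where null = "- \<infinity>" and Q = "\<lambda>W Z. W \<inter> Z = {} \<and> Z \<noteq> {}"
      and P = "\<lambda>x. (\<forall>c. x c \<noteq> \<infinity>) \<and>
        (\<forall>i. trop_mat_vec (\<lambda>i c. trop_log (necp_system M i c)) x i = trop_log (q i))"]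
  unfolding trop_solution_iff trop_supp_def by (simp only: conj_assoc)

theorem theorem1p4:
  fixes M :: "'n::finite \<Rightarrow> 'n \<Rightarrow> real" and q :: "'n \<Rightarrow> real"
  assumes nonpos: "\<forall>i j. M i j \<le> 0"
    and negcol: "\<forall>j. \<exists>i. M i j < 0"
    and qpos: "\<forall>i. q i > 0"
    and dom: "necp_dominance M q"
  shows "{(supp w, supp z) | w z. necp_solution M q w z} =
         {(trop_supp w, trop_supp z) | w z.
            trop_solution (\<lambda>i j. trop_log (- M i j)) (\<lambda>i. trop_log (q i)) w z}"
proof -
  interpret nonneg_system "necp_system M" q
    using nonpos negcol qpos by (rule necp_system_nonneg_system)
  have "dominance_condition N"
    using dom by (simp add: necp_dominance_def)
  then show ?thesis
    by (simp only: necp_support_pairs tnecp_support_pairs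
        nonneg_solution_supports_eq_covering_sets trop_solution_supports_eq_covering_sets)
qed

end
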